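(* Let $q$ be a power of an odd prime $p$, and let $\ell$ be a linearized polynomial over $\mathbb F_{q^2}$. Then the function $f(x)=x^{q+1}+\ell(x^2)$ is planar on $\mathbb F_{q^2}$ if and only if $\ell(u)^2-\mathrm N(u)$ is a nonzero square in $\mathbb F_q$ for every $u\in\mathbb F_{q^2}^*$ such that $\ell(u)\in\mathbb F_q$.
   Context: $\mathrm N$ denotes the norm map from $\mathbb F_{q^2}$ to $\mathbb F_q$, $\mathrm N(u)=u^{q+1}$. A linearized polynomial over $\mathbb F_{q^2}$ is a polynomial of the form $\sum_i c_i x^{p^i}$ with $c_i\in\mathbb F_{q^2}$ (it induces an $\mathbb F_p$-linear endomorphism of $\mathbb F_{q^2}$). A function $f:\mathbb F_{q^n}\to\mathbb F_{q^n}$ (induced by a polynomial) is planar if for every $c\in\mathbb F_{q^n}^*$ the map $x\mapsto f(x+c)-f(x)$ is a permutation of $\mathbb F_{q^n}$. *)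

theory Defs
  imports Main "HOL-Computational_Algebra.Primes"
begin

text \<open>Setting: the ambient finite field F_{q^2} is a finite field type 'a with CARD('a) = q^2.\<close>

definition linearized :: "nat \<Rightarrow> ('a::field \<Rightarrow> 'a) \<Rightarrow> bool" where
  "linearized p l \<longleftrightarrow> (\<exists>(n::nat) (c::nat \<Rightarrow> 'a). \<forall>x. l x = (\<Sum>i<n. c i * x ^ (p ^ i)))"

definition planar :: "('a::field \<Rightarrow> 'a) \<Rightarrow> bool" where
  "planar f \<longleftrightarrow> (\<forall>c. c \<noteq> 0 \<longrightarrow> bij (\<lambda>x. f (x + c) - f x))"

definition norm_q :: "nat \<Rightarrow> 'a::field \<Rightarrow> 'a" where
  "norm_q q u = u ^ (q + 1)"

definition subfield_q :: "nat \<Rightarrow> 'a::field set" where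
  "subfield_q q = {x. x ^ q = x}"

end

theory Submission
  imports Defs "HOL-Number_Theory.Residues" "HOL-Computational_Algebra.Polynomial"
    "HOL-Library.Cardinality"
begin

text \<open>Since \<open>x \<mapsto> x ^ q\<close> and \<open>l\<close> are additive, \<open>f (x + c) - f x\<close> is an additive function of \<open>x\<close>
  plus the constant \<open>f c\<close>, so \<open>f\<close> is planar iff these additive maps have trivial kernels.
  Substituting \<open>u = x c\<close> and \<open>t = c ^ (q - 1)\<close>, which by Hilbert 90 runs through all elements of
  norm one, the kernel equation becomes \<open>u t\<^sup>2 + 2 l(u) t + u ^ q = 0\<close>. Raising such a root
  equation to the \<open>q\<close>-th power shows \<open>l(u) \<in> \<bbbF>\<^sub>q\<close>, and then \<open>(u t + l(u))\<^sup>2\<close> is the discriminant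
  \<open>l(u)\<^sup>2 - N(u) \<in> \<bbbF>\<^sub>q\<close>. A root of norm one exists exactly when the discriminant has a square
  root \<open>s\<close> with \<open>s ^ q = -s\<close>, that is, when it is zero or a non-square of \<open>\<bbbF>\<^sub>q\<close>.\<close>

lemma finite_field_power_card_minus_one:
  fixes x :: "'a::{field,finite}"
  assumes "x \<noteq> 0"
  shows "x ^ (CARD('a) - 1) = 1"
proof -
  have "(\<Prod>y\<in>UNIV-{0}. x * y) = x ^ (CARD('a) - 1) * \<Prod>(UNIV-{0::'a})"
    by (simp add: prod.distrib mult_ac)
  moreover have "(\<Prod>y\<in>UNIV-{0}. x * y) = \<Prod>(UNIV-{0::'a})"
    by (rule prod.reindex_bij_witness[of _ "\<lambda>y. y / x" "\<lambda>y. x * y"]) (use assms in auto)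
  moreover have "\<Prod>(UNIV-{0::'a}) \<noteq> 0"
    by simp
  ultimately show ?thesis
    by (metis mult_cancel_right2)
qed

lemma card_roots_of_unity_le:
  assumes "m > 0"
  shows "card {z :: 'a::idom. z ^ m = 1} \<le> m"
proof -
  define P :: "'a poly" where "P = monom 1 m + [:-1:]"
  have "degree P = m"
    using assms unfolding P_def by (subst degree_add_eq_left) (auto simp: degree_monom_eq)
  moreover from this have "P \<noteq> 0"
    using assms by auto
  moreover have "{z. z ^ m = 1} = {z. poly P z = 0}"
    by (auto simp: P_def poly_monom)
  ultimately show ?thesis
    using card_poly_roots_bound[of P] by simp
qed

lemma two_le_card_field: "2 \<le> CARD('a::{field,finite})"
proof -
  have "card {0, 1 :: 'a} \<le> CARD('a)"
    by (rule card_mono) auto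
  then show ?thesis
    by simp
qed

text \<open>Half of Euler's criterion: the nonzero squares number at least \<open>(n - 1)/2\<close>, since each has at
  most two square roots, and they all lie among the at most \<open>(n - 1)/2\<close> roots of
  \<open>z ^ ((n - 1) div 2) = 1\<close>, so they are exactly these roots.\<close>
lemma finite_field_square_if_power_half_eq_one:
  fixes x :: "'a::{field,finite}"
  assumes odd_card: "odd CARD('a)" and x: "x ^ ((CARD('a) - 1) div 2) = 1"
  shows "\<exists>s. x = s ^ 2"
proof -
  define m where "m = (CARD('a) - 1) div 2"
  define squares where "squares = (\<lambda>s. s ^ 2) ` (UNIV - {0 :: 'a})"
  have card_units: "card (UNIV - {0 :: 'a}) = 2 * m"
    using odd_card two_le_card_field[where 'a='a] by (simp add: m_def card_Diff_singleton)
  have "m > 0"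
    using odd_card two_le_card_field[where 'a='a] unfolding m_def by presburger
  have squares_sub: "squares \<subseteq> {z. z ^ m = 1}"
  proof
    fix z assume "z \<in> squares"
    then obtain s where "s \<noteq> 0" "z = s ^ 2"
      by (auto simp: squares_def)
    then show "z \<in> {z. z ^ m = 1}"
      using finite_field_power_card_minus_one[of s] card_units
      by (simp add: card_Diff_singleton flip: power_mult)
  qed
  have fibre: "card {s. s ^ 2 = y} \<le> 2" if "y \<in> squares" for y
  proof -
    obtain a where "y = a ^ 2"
      using \<open>y \<in> squares\<close> unfolding squares_def by blast
    then have "{s. s ^ 2 = y} = {a, -a}"
      by (auto simp: power2_eq_iff)
    then show ?thesis
      by (simp add: card_insert_if)
  qed
  have "2 * m \<le> card (\<Union>y\<in>squares. {s. s ^ 2 = y})"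
    unfolding card_units[symmetric] by (rule card_mono) (auto simp: squares_def)
  also have "\<dots> \<le> (\<Sum>y\<in>squares. card {s. s ^ 2 = y})"
    by (rule card_UN_le) simp
  also have "\<dots> \<le> 2 * card squares"
    using sum_bounded_above[of squares "\<lambda>y. card {s. s ^ 2 = y}" 2] fibre by (simp add: mult.commute)
  finally have "card {z :: 'a. z ^ m = 1} \<le> card squares"
    using card_roots_of_unity_le[OF \<open>m > 0\<close>, where 'a='a] by linarith
  then have "squares = {z. z ^ m = 1}"
    by (intro card_seteq squares_sub) simp_all
  then show ?thesis
    using x by (auto simp: squares_def m_def)
qed

lemma power_power_commute: "(a ^ m) ^ n = (a ^ n) ^ m" for a :: "'a::monoid_mult"
  by (simp only: mult.commute flip: power_mult)

lemma mem_subfield_q_iff: "x \<in> subfield_q q \<longleftrightarrow> x ^ q = x"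
  by (simp add: subfield_q_def)

lemma norm_q_mult: "norm_q q (x * y) = norm_q q x * norm_q q y"
  by (simp add: norm_q_def power_mult_distrib)

lemma CHAR_eq_if_card_eq_prime_power:
  assumes "prime p" and "CARD('a::{field,finite}) = p ^ n"
  shows "CHAR('a) = p"
proof -
  have "prime CHAR('a)"
    by (rule prime_CHAR_semidom) (simp add: finite_imp_CHAR_pos)
  moreover have "CHAR('a) dvd p ^ n"
    using CHAR_dvd_CARD[where 'a='a] assms(2) by simp
  ultimately show ?thesis
    using assms(1) by (metis prime_dvd_power primes_dvd_imp_eq)
qed

lemma linearized_imp_additive:
  fixes l :: "'a::field \<Rightarrow> 'a"
  assumes "prime CHAR('a)" and "linearized CHAR('a) l"
  shows "additive l"
proof
  fix x y :: 'a
  obtain n c where l: "\<And>x. l x = (\<Sum>i<n. c i * x ^ (CHAR('a) ^ i))"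
    using assms(2) unfolding linearized_def by blast
  have "(x + y) ^ (CHAR('a) ^ i) = x ^ (CHAR('a) ^ i) + y ^ (CHAR('a) ^ i)" for i
    by (rule freshmans_dream'[OF assms(1) refl])
  then show "l (x + y) = l x + l y"
    by (simp add: l distrib_left sum.distrib)
qed

lemma bij_additive_plus_const_iff:
  fixes A :: "'a::{ab_group_add,finite} \<Rightarrow> 'a"
  assumes "additive A"
  shows "bij (\<lambda>x. A x + b) \<longleftrightarrow> (\<forall>x. A x = 0 \<longrightarrow> x = 0)"
proof -
  have "bij (\<lambda>x. A x + b) \<longleftrightarrow> inj (\<lambda>x. A x + b)"
    using finite_UNIV_inj_surj[of "\<lambda>x. A x + b"] by (auto simp: bij_def)
  also have "\<dots> \<longleftrightarrow> (\<forall>x. A x = 0 \<longrightarrow> x = 0)"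
    unfolding inj_def using additive.diff[OF assms] additive.zero[OF assms]
    by (metis add_right_cancel eq_iff_diff_eq_0)
  finally show ?thesis .
qed

context
  fixes q k :: nat
  assumes card_UNIV: "CARD('a::{field,finite}) = q ^ 2"
    and q_eq_CHAR_power: "q = CHAR('a) ^ k"
begin

lemma prime_CHAR: "prime CHAR('a)"
  by (rule prime_CHAR_semidom) (simp add: finite_imp_CHAR_pos)

lemma q_gt_1: "q > 1"
proof -
  have "2 \<le> q ^ 2"
    using two_le_card_field[where 'a='a] card_UNIV by simp
  then show ?thesis
    by (cases "q \<le> 1") (use power_mono[of q 1 2] in auto)
qed

lemma frobenius_add: "(x + y :: 'a) ^ q = x ^ q + y ^ q"
  by (rule freshmans_dream'[OF prime_CHAR q_eq_CHAR_power])

lemma frobenius_minus: "(- x :: 'a) ^ q = - (x ^ q)"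
proof -
  have "x ^ q + (- x) ^ q = 0"
    using frobenius_add[of x "- x"] q_gt_1 by (simp add: power_0_left)
  then show ?thesis
    by (simp add: add_eq_0_iff)
qed

lemma frobenius_diff: "(x - y :: 'a) ^ q = x ^ q - y ^ q"
  using frobenius_add[of x "- y"] by (simp add: frobenius_minus)

lemma frobenius_frobenius: "((x :: 'a) ^ q) ^ q = x"
proof (cases "x = 0")
  case False
  have "(x ^ q) ^ q = x * x ^ (CARD('a) - 1)"
    using q_gt_1 by (simp add: card_UNIV power2_eq_square flip: power_mult power_Suc)
  then show ?thesis
    using finite_field_power_card_minus_one[OF False] by simp
qed (use q_gt_1 in simp)

lemma frobenius_two: "(2 :: 'a) ^ q = 2"
  using frobenius_add[of 1 1] by simp

lemma norm_q_in_subfield_q: "norm_q q (x :: 'a) \<in> subfield_q q"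
  by (simp add: mem_subfield_q_iff norm_q_def power_add power_mult_distrib frobenius_frobenius
      mult.commute)

lemma norm_q_of_subfield_q: "a \<in> subfield_q q \<Longrightarrow> norm_q q (a :: 'a) = a ^ 2"
  by (simp add: mem_subfield_q_iff norm_q_def power2_eq_square)

lemma norm_q_frobenius_quotient: "(c :: 'a) \<noteq> 0 \<Longrightarrow> norm_q q (c ^ q / c) = 1"
  by (simp add: norm_q_def power_divide power_add frobenius_frobenius mult.commute)

lemma subfield_q_power_q_minus_1:
  assumes "a \<in> subfield_q q" and "a \<noteq> 0"
  shows "(a :: 'a) ^ (q - 1) = 1"
proof -
  have "a * a ^ (q - 1) = a ^ Suc (q - 1)"
    by (rule power_Suc[symmetric])
  also have "\<dots> = a * 1"
    using assms(1) q_gt_1 by (simp add: mem_subfield_q_iff)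
  finally show ?thesis
    using assms(2) by simp
qed

lemma exists_not_in_subfield_q: "\<exists>a :: 'a. a \<notin> subfield_q q"
proof (rule ccontr)
  assume "\<not> ?thesis"
  then have "a ^ (q - 1) = 1" if "a \<noteq> 0" for a :: 'a
    using that subfield_q_power_q_minus_1 by blast
  then have "card (UNIV - {0 :: 'a}) \<le> card {z :: 'a. z ^ (q - 1) = 1}"
    by (intro card_mono) auto
  also have "\<dots> \<le> q - 1"
    using q_gt_1 by (intro card_roots_of_unity_le) simp
  finally have "q * q - 1 \<le> q - 1"
    by (simp add: card_Diff_singleton card_UNIV power2_eq_square)
  moreover have "q < q * q"
    using q_gt_1 by simp
  ultimately show False
    using q_gt_1 by arith
qed

text \<open>Hilbert's Theorem 90 for the quadratic extension: the element \<open>a + t ^ q * a ^ q\<close> always satisfies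
  \<open>c ^ q = t * c\<close>, and it is nonzero for \<open>a = 1\<close> unless \<open>t = -1\<close>, in which case any \<open>a\<close> outside
  \<open>\<bbbF>\<^sub>q\<close> works.\<close>
lemma norm_q_eq_1_imp_frobenius_quotient:
  assumes "norm_q q t = 1"
  shows "\<exists>c :: 'a. c \<noteq> 0 \<and> c ^ q = t * c"
proof -
  have solution: "(a + t ^ q * a ^ q) ^ q = t * (a + t ^ q * a ^ q)" for a :: 'a
  proof -
    have "(a + t ^ q * a ^ q) ^ q = a ^ q + t * a"
      by (simp add: frobenius_add power_mult_distrib frobenius_frobenius)
    also have "\<dots> = t * a + t ^ (q + 1) * a ^ q"
      using assms by (simp add: norm_q_def)
    also have "\<dots> = t * (a + t ^ q * a ^ q)"
      by (simp add: algebra_simps)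
    finally show ?thesis .
  qed
  show ?thesis
  proof (cases "1 + t ^ q = 0")
    case False
    then show ?thesis
      using solution[of 1] by auto
  next
    case True
    obtain a :: 'a where "a \<notin> subfield_q q"
      using exists_not_in_subfield_q by blast
    moreover have "t ^ q = -1"
      using True by (simp add: add_eq_0_iff)
    ultimately show ?thesis
      using solution[of a] by (intro exI[of _ "a + t ^ q * a ^ q"]) (auto simp: mem_subfield_q_iff)
  qed
qed

context
  assumes odd_q: "odd q"
begin

lemma two_neq_zero: "(2 :: 'a) \<noteq> 0"
proof
  assume "(2 :: 'a) = 0"
  then have "of_nat 2 = (0 :: 'a)"
    by simp
  then have "CHAR('a) dvd 2"
    by (simp only: of_nat_eq_0_iff_char_dvd)
  then have "CHAR('a) = 2"
    using prime_CHAR by (simp add: primes_dvd_imp_eq)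
  then show False
    using odd_q q_eq_CHAR_power q_gt_1 by (cases k) auto
qed

lemma subfield_q_subset_squares:
  assumes "a \<in> subfield_q q"
  shows "\<exists>s :: 'a. a = s ^ 2"
proof (cases "a = 0")
  case False
  obtain j where j: "q = 2 * j + 1"
    using odd_q by (blast elim: oddE)
  have "a ^ (q - 1) = 1"
    using assms False by (rule subfield_q_power_q_minus_1)
  moreover have "(CARD('a) - 1) div 2 = (q - 1) * (j + 1)"
    unfolding card_UNIV j by (simp add: power2_eq_square algebra_simps)
  ultimately have "a ^ ((CARD('a) - 1) div 2) = 1"
    by (simp only: power_mult power_one)
  moreover have "odd CARD('a)"
    using odd_q by (simp add: card_UNIV)
  ultimately show ?thesis
    by (intro finite_field_square_if_power_half_eq_one)
qed (simp add: zero_power2)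

lemma norm_one_root_imp_in_subfield_q:
  fixes t u L :: 'a
  assumes t: "norm_q q t = 1" and root: "u * t ^ 2 + 2 * L * t + u ^ q = 0"
  shows "L \<in> subfield_q q"
proof -
  have tq: "t ^ q * t = 1"
    using t by (simp add: norm_q_def mult.commute)
  have "0 = (u * t ^ 2 + 2 * L * t + u ^ q) ^ q"
    using root q_gt_1 by (simp add: power_0_left)
  also have "\<dots> = u ^ q * (t ^ q) ^ 2 + 2 * L ^ q * t ^ q + u"
    by (simp add: frobenius_add power_mult_distrib frobenius_frobenius frobenius_two
        power_power_commute[of t 2])
  finally have "0 = t ^ 2 * (u ^ q * (t ^ q) ^ 2 + 2 * L ^ q * t ^ q + u)"
    by simp
  also have "\<dots> = u ^ q * (t ^ q * t) ^ 2 + 2 * L ^ q * t * (t ^ q * t) + u * t ^ 2"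
    by (simp add: algebra_simps power2_eq_square)
  also have "\<dots> = u * t ^ 2 + 2 * L ^ q * t + u ^ q"
    by (simp add: tq)
  finally have conj_root: "0 = u * t ^ 2 + 2 * L ^ q * t + u ^ q" .
  have "2 * t * (L ^ q - L) = (u * t ^ 2 + 2 * L ^ q * t + u ^ q) - (u * t ^ 2 + 2 * L * t + u ^ q)"
    by (simp add: algebra_simps)
  then have "2 * t * (L ^ q - L) = 0"
    using root conj_root by simp
  moreover have "t \<noteq> 0"
    using tq by auto
  ultimately show ?thesis
    using two_neq_zero by (simp add: mem_subfield_q_iff)
qed

text \<open>If \<open>t\<close> is a root on the norm-one circle, then \<open>(u t + L)\<^sup>2\<close> is the discriminant, and comparing
  norms of \<open>u t = \<sigma> - L\<close> with \<open>\<sigma> \<in> \<bbbF>\<^sub>q\<close> leaves only \<open>\<sigma> = 0\<close>.\<close>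
lemma norm_one_root_imp_discriminant_root_eq_0:
  fixes t u L y :: 'a
  assumes u: "u \<noteq> 0" and t: "norm_q q t = 1" and root: "u * t ^ 2 + 2 * L * t + u ^ q = 0"
    and L: "L \<in> subfield_q q" and y: "y \<in> subfield_q q" "L ^ 2 - norm_q q u = y ^ 2"
  shows "y = 0"
proof -
  have "(u * t + L) ^ 2 = u * (u * t ^ 2 + 2 * L * t + u ^ q) + L ^ 2 - norm_q q u"
    by (simp add: norm_q_def algebra_simps power2_eq_square)
  then have "(u * t + L) ^ 2 = y ^ 2"
    using root y(2) by simp
  then obtain \<sigma> where \<sigma>: "\<sigma> = y \<or> \<sigma> = - y" and ut: "u * t = \<sigma> - L"
    by (metis power2_eq_iff add_diff_cancel_right')
  have "\<sigma> - L \<in> subfield_q q"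
    using \<sigma> y(1) L by (auto simp: mem_subfield_q_iff frobenius_diff frobenius_minus)
  then have norm_u: "norm_q q u = (\<sigma> - L) ^ 2"
    using norm_q_mult[of q u t] t ut by (simp add: norm_q_of_subfield_q)
  have "2 * \<sigma> * (L - \<sigma>) = L ^ 2 - (\<sigma> - L) ^ 2 - \<sigma> ^ 2"
    by (simp add: algebra_simps power2_eq_square)
  also have "\<dots> = 0"
    using y(2) \<sigma> norm_u by auto
  finally have "2 * \<sigma> * (L - \<sigma>) = 0" .
  moreover have "L \<noteq> \<sigma>"
    using \<open>norm_q q u = (\<sigma> - L) ^ 2\<close> u by (auto simp: norm_q_def)
  ultimately show ?thesis
    using two_neq_zero \<sigma> by auto
qed

lemma norm_one_root_if_conjugate_sqrt_discriminant:
  fixes u L s :: 'a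
  assumes u: "u \<noteq> 0" and L: "L \<in> subfield_q q"
    and s: "s ^ 2 = L ^ 2 - norm_q q u" "s ^ q = - s"
  shows "\<exists>t. norm_q q t = 1 \<and> u * t ^ 2 + 2 * L * t + u ^ q = 0"
proof (intro exI conjI)
  have "norm_q q (s - L) = (- s - L) * (s - L)"
    using L s(2) by (simp add: norm_q_def frobenius_diff mem_subfield_q_iff mult.commute)
  also have "\<dots> = norm_q q u"
    using s(1) by (simp add: algebra_simps power2_eq_square)
  finally show "norm_q q ((s - L) / u) = 1"
    using u by (simp add: norm_q_def power_divide)
  have "u * ((s - L) / u) ^ 2 + 2 * L * ((s - L) / u) + u ^ q = (s ^ 2 - L ^ 2 + norm_q q u) / u"
    using u by (simp add: norm_q_def field_simps power2_eq_square)
  then show "u * ((s - L) / u) ^ 2 + 2 * L * ((s - L) / u) + u ^ q = 0"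
    using s(1) by simp
qed

lemma exists_norm_one_root_iff:
  fixes u L :: 'a
  assumes u: "u \<noteq> 0"
  shows "(\<exists>t. norm_q q t = 1 \<and> u * t ^ 2 + 2 * L * t + u ^ q = 0) \<longleftrightarrow>
    L \<in> subfield_q q \<and>
    \<not> (L ^ 2 - norm_q q u \<noteq> 0 \<and> (\<exists>y \<in> subfield_q q. L ^ 2 - norm_q q u = y ^ 2))"
    (is "?root \<longleftrightarrow> _ \<and> \<not> (?D \<noteq> 0 \<and> _)")
proof
  assume ?root
  then obtain t where t: "norm_q q t = 1" and root: "u * t ^ 2 + 2 * L * t + u ^ q = 0"
    by blast
  have L: "L \<in> subfield_q q"
    using t root by (rule norm_one_root_imp_in_subfield_q)
  moreover have "?D = 0" if "y \<in> subfield_q q" "?D = y ^ 2" for y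
    using norm_one_root_imp_discriminant_root_eq_0[OF u t root L that] that(2) by simp
  ultimately show "L \<in> subfield_q q \<and> \<not> (?D \<noteq> 0 \<and> (\<exists>y \<in> subfield_q q. ?D = y ^ 2))"
    by blast
next
  assume L: "L \<in> subfield_q q \<and> \<not> (?D \<noteq> 0 \<and> (\<exists>y \<in> subfield_q q. ?D = y ^ 2))"
  have "?D ^ q = (L ^ q) ^ 2 - norm_q q u ^ q"
    by (simp add: frobenius_diff power_power_commute[of L 2 q])
  then have D: "?D \<in> subfield_q q"
    using L norm_q_in_subfield_q[of u] by (simp add: mem_subfield_q_iff)
  then obtain s where s: "?D = s ^ 2"
    using subfield_q_subset_squares by blast
  have "(s ^ q) ^ 2 = (s ^ 2) ^ q"
    by (rule power_power_commute)
  also have "\<dots> = s ^ 2"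
    using D s by (simp add: mem_subfield_q_iff)
  finally have "s ^ q = s \<or> s ^ q = - s"
    by (simp add: power2_eq_iff)
  moreover have "s = 0" if "s ^ q = s"
    using L s that by (auto simp: mem_subfield_q_iff)
  ultimately have "s ^ q = - s"
    using q_gt_1 by (auto simp: power_0_left)
  then show ?root
    using norm_one_root_if_conjugate_sqrt_discriminant u L s by simp
qed

context
  fixes l :: "'a \<Rightarrow> 'a"
  assumes linearized_l: "linearized CHAR('a) l"
begin

lemma additive_l: "additive l"
  by (rule linearized_imp_additive[OF prime_CHAR linearized_l])

definition diff_linear :: "'a \<Rightarrow> 'a \<Rightarrow> 'a" where
  "diff_linear c x = x ^ q * c + x * c ^ q + 2 * l (x * c)"

lemma additive_diff_linear: "additive (diff_linear c)"
proof
  fix x y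
  have "l ((x + y) * c) = l (x * c) + l (y * c)"
    by (simp add: distrib_right additive.add[OF additive_l])
  then show "diff_linear c (x + y) = diff_linear c x + diff_linear c y"
    by (simp add: diff_linear_def frobenius_add algebra_simps)
qed

lemma difference_eq_diff_linear:
  "((x + c) ^ (q + 1) + l ((x + c) ^ 2)) - (x ^ (q + 1) + l (x ^ 2)) =
    diff_linear c x + (c ^ (q + 1) + l (c ^ 2))"
proof -
  have "(x + c) ^ (q + 1) = (x ^ q + c ^ q) * (x + c)"
    by (simp add: frobenius_add)
  moreover have "(x + c) ^ 2 = x ^ 2 + (x * c + x * c) + c ^ 2"
    by (simp add: power2_eq_square algebra_simps)
  then have "l ((x + c) ^ 2) = l (x ^ 2) + 2 * l (x * c) + l (c ^ 2)"
    by (simp only: additive.add[OF additive_l] mult_2)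
  ultimately show ?thesis
    by (simp add: diff_linear_def algebra_simps)
qed

lemma planar_iff_diff_linear_kernel_trivial:
  "planar (\<lambda>x. x ^ (q + 1) + l (x ^ 2)) \<longleftrightarrow> (\<forall>c x. c \<noteq> 0 \<longrightarrow> diff_linear c x = 0 \<longrightarrow> x = 0)"
  unfolding planar_def difference_eq_diff_linear
  by (simp add: bij_additive_plus_const_iff[OF additive_diff_linear])

lemma frobenius_quotient_times_diff_linear:
  assumes "c \<noteq> 0"
  shows "(c ^ q / c) * diff_linear c x =
    (x * c) * (c ^ q / c) ^ 2 + 2 * l (x * c) * (c ^ q / c) + (x * c) ^ q"
  using assms by (simp add: diff_linear_def field_simps power2_eq_square)

lemma planar_iff_no_norm_one_root:
  "planar (\<lambda>x. x ^ (q + 1) + l (x ^ 2)) \<longleftrightarrow>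
    (\<forall>u t. u \<noteq> 0 \<longrightarrow> norm_q q t = 1 \<longrightarrow> u * t ^ 2 + 2 * l u * t + u ^ q \<noteq> 0)"
  unfolding planar_iff_diff_linear_kernel_trivial
proof (intro iffI allI impI notI)
  fix u t
  assume no_kernel: "\<forall>c x. c \<noteq> 0 \<longrightarrow> diff_linear c x = 0 \<longrightarrow> x = 0"
    and u: "u \<noteq> 0" and t: "norm_q q t = 1" and root: "u * t ^ 2 + 2 * l u * t + u ^ q = 0"
  obtain c where c: "c \<noteq> 0" "c ^ q = t * c"
    using norm_q_eq_1_imp_frobenius_quotient[OF t] by blast
  then have "t * diff_linear c (u / c) = u * t ^ 2 + 2 * l u * t + u ^ q"
    using frobenius_quotient_times_diff_linear[OF c(1), of "u / c"] by simp
  moreover have "t \<noteq> 0"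
    using t q_gt_1 by (auto simp: norm_q_def)
  ultimately have "diff_linear c (u / c) = 0"
    using root by simp
  then have "u / c = 0"
    using no_kernel c(1) by blast
  then show False
    using c(1) u by simp
next
  fix c x
  assume no_root: "\<forall>u t. u \<noteq> 0 \<longrightarrow> norm_q q t = 1 \<longrightarrow> u * t ^ 2 + 2 * l u * t + u ^ q \<noteq> 0"
    and c: "c \<noteq> 0" and kernel: "diff_linear c x = 0"
  have "(x * c) * (c ^ q / c) ^ 2 + 2 * l (x * c) * (c ^ q / c) + (x * c) ^ q = 0"
    using frobenius_quotient_times_diff_linear[OF c, of x] kernel by simp
  then have "x * c = 0"
    using no_root norm_q_frobenius_quotient[OF c] by blast
  then show "x = 0"
    using c by simp
qed

theorem planar_iff_discriminant_nonzero_square: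
  "planar (\<lambda>x. x ^ (q + 1) + l (x ^ 2)) \<longleftrightarrow>
    (\<forall>u. u \<noteq> 0 \<and> l u \<in> subfield_q q \<longrightarrow>
       (l u ^ 2 - norm_q q u \<noteq> 0 \<and> (\<exists>y \<in> subfield_q q. l u ^ 2 - norm_q q u = y ^ 2)))"
  unfolding planar_iff_no_norm_one_root using exists_norm_one_root_iff by blast

end

end

end

theorem proposition2p1:
  fixes p q k :: nat and l :: "'a::{field,finite} \<Rightarrow> 'a"
  assumes "prime p" and "odd p" and "k \<ge> 1" and "q = p ^ k"
    and "card (UNIV :: 'a set) = q ^ 2"
    and "linearized p l"
  shows "planar (\<lambda>x. x ^ (q + 1) + l (x ^ 2)) \<longleftrightarrow>
    (\<forall>u. u \<noteq> 0 \<and> l u \<in> subfield_q q \<longrightarrow>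
       (l u ^ 2 - norm_q q u \<noteq> 0 \<and>
        (\<exists>y \<in> subfield_q q. l u ^ 2 - norm_q q u = y ^ 2)))"
proof -
  have "card (UNIV :: 'a set) = p ^ (k * 2)"
    using assms(4,5) by (simp add: power_mult)
  then have CHAR: "CHAR('a) = p"
    using assms(1) by (intro CHAR_eq_if_card_eq_prime_power)
  have "q = CHAR('a) ^ k" and "odd q" and "linearized CHAR('a) l"
    using assms(2,4,6) CHAR by simp_all
  with assms(5) show ?thesis
    by (rule planar_iff_discriminant_nonzero_square)
qed

end
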